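(* Let $E$ be a nonzero real Banach space and $S\colon E\rightrightarrows E^*$ be closed and monotone. Then the following are equivalent: (a) $S$ is quasidense; (b) for all $w\in E$, all nonempty $w(E^*,E)$-compact convex subsets $\widetilde W$ of $E^*$ and all $\eta>0$, there exists $(s,s^* )\in G(S)$ such that $\tfrac12\|s-w\|^2+\tfrac12\operatorname{dist}(s^*,\widetilde W)^2+\max_{x^*\in\widetilde W}\langle s-w,s^*-x^*\rangle<\eta$.
   Context: For a multifunction $S\colon E\rightrightarrows E^*$ with nonempty graph $G(S)$: closed means $G(S)$ norm-closed; monotone means $\langle s-t,s^*-t^*\rangle\ge0$ on $G(S)$; quasidense means for every $(x,x^* )\in E\times E^*$, $\inf_{(s,s^* )\in G(S)}[\tfrac12\|s-x\|^2+\tfrac12\|s^*-x^*\|^2+\langle s-x,s^*-x^*\rangle]\le0$. $\operatorname{dist}$ is norm distance in $E^*$. *)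

theory Defs
  imports "HOL-Analysis.Analysis"
begin

(* The dual E* of a real Banach space E is modelled as the type 'a =>L real of
  bounded linear functionals; the pairing is blinfun_apply.  A multifunction S is
  identified with its graph G(S). *)

definition weak_star_topology :: "('a::real_normed_vector \<Rightarrow>\<^sub>L real) topology" where
  "weak_star_topology =
     topology_generated_by {{f. blinfun_apply f x \<in> U} | x U. open (U :: real set)}"

definition monotone_graph :: "('a::real_normed_vector \<times> ('a \<Rightarrow>\<^sub>L real)) set \<Rightarrow> bool" where
  "monotone_graph G \<longleftrightarrow>
     (\<forall>(s, s') \<in> G. \<forall>(t, t') \<in> G. blinfun_apply (s' - t') (s - t) \<ge> 0)"

definition quasidense :: "('a::real_normed_vector \<times> ('a \<Rightarrow>\<^sub>L real)) set \<Rightarrow> bool" where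
  "quasidense G \<longleftrightarrow>
     (\<forall>x x'. (INF p\<in>G. (norm (fst p - x))\<^sup>2 / 2 + (norm (snd p - x'))\<^sup>2 / 2
                        + blinfun_apply (snd p - x') (fst p - x)) \<le> 0)"

end

theory Submission
  imports Defs
begin

text \<open>
  (b) implies (a) by taking \<open>W\<close> to be a singleton.
  For the converse, weak-star compact sets are norm bounded (Baire), and monotonicity confines
  the points provided by quasidensity to a bounded set: for each \<open>z \<in> W\<close> there is \<open>a \<in> G\<close>
  for which the quantity of (b), with the maximum replaced by the value at \<open>z\<close>, is small.
  That quantity is affine and weak-star continuous in \<open>z\<close>, so a minimax lemma over the
  weak-star compact convex set \<open>W\<close> yields a single convex combination \<open>m\<close> of finitely many
  such \<open>a\<close> that works for all \<open>z\<close> at once. The point \<open>m\<close> need not lie in \<open>G\<close>, but by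
  monotonicity the Jensen defect \<open>\<delta>\<close> of the pairing along the combination is nonnegative and
  small, and \<open>q_L (b - m) \<ge> - \<delta>\<close> for every \<open>b \<in> G\<close>. Quasidensity at \<open>m\<close> therefore
  produces \<open>b \<in> G\<close> close to \<open>m\<close>, and the quantity is Lipschitz on bounded sets.
\<close>

section \<open>The weak-star topology\<close>

lemma topspace_weak_star_topology [simp]:
  "topspace (weak_star_topology :: ('a::real_normed_vector \<Rightarrow>\<^sub>L real) topology) = UNIV"
proof -
  have "UNIV \<in> {{f::'a \<Rightarrow>\<^sub>L real. f x \<in> U} | x U. open (U :: real set)}"
    by (intro CollectI exI[of _ 0] exI[of _ UNIV]) simp
  then show ?thesis
    unfolding weak_star_topology_def topology_generated_by_topspace by blast
qed

lemma openin_weak_star_evaluation: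
  assumes "open U"
  shows "openin weak_star_topology {f::'a::real_normed_vector \<Rightarrow>\<^sub>L real. f x \<in> U}"
  unfolding weak_star_topology_def openin_topology_generated_by_iff
  by (rule generate_topology_on.Basis) (use assms in blast)

lemma continuous_map_weak_star_evaluation:
  "continuous_map weak_star_topology euclideanreal (\<lambda>f::'a::real_normed_vector \<Rightarrow>\<^sub>L real. f x)"
  by (simp add: continuous_map_def openin_weak_star_evaluation)

lemma compact_evaluation_image:
  "compactin weak_star_topology K \<Longrightarrow> compact ((\<lambda>f::'a::real_normed_vector \<Rightarrow>\<^sub>L real. f x) ` K)"
  using image_compactin[OF _ continuous_map_weak_star_evaluation] by fastforce

lemma closedin_weak_star_evaluation_le:
  "closedin weak_star_topology {f::'a::real_normed_vector \<Rightarrow>\<^sub>L real. f x \<le> c}"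
proof -
  have "openin weak_star_topology {f::'a \<Rightarrow>\<^sub>L real. f x \<in> {c<..}}"
    by (rule openin_weak_star_evaluation) simp
  moreover have "UNIV - {f::'a \<Rightarrow>\<^sub>L real. f x \<le> c} = {f::'a \<Rightarrow>\<^sub>L real. f x \<in> {c<..}}"
    by auto
  ultimately show ?thesis
    unfolding closedin_def by simp
qed

lemma weak_star_compact_evaluation_bounded:
  assumes "compactin weak_star_topology K"
  obtains B where "\<And>f::'a::real_normed_vector \<Rightarrow>\<^sub>L real. f \<in> K \<Longrightarrow> \<bar>f x\<bar> \<le> B"
  using compact_imp_bounded[OF compact_evaluation_image[OF assms, of x]] by (auto simp: bounded_iff)

lemma weak_star_compact_evaluation_attains_min:
  assumes "compactin weak_star_topology K" "K \<noteq> {}"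
  obtains f0 where "f0 \<in> K" "\<And>f::'a::real_normed_vector \<Rightarrow>\<^sub>L real. f \<in> K \<Longrightarrow> f0 x \<le> f x"
  using compact_attains_inf[OF compact_evaluation_image[OF assms(1), of x]] assms(2) by auto

lemma norm_blinfun_le_of_ball:
  fixes f :: "'a::real_normed_vector \<Rightarrow>\<^sub>L real"
  assumes r: "r > 0" and bound: "\<And>y. y \<in> ball x0 r \<Longrightarrow> \<bar>f y\<bar> \<le> c"
  shows "norm f \<le> 4 * c / r"
proof (rule norm_blinfun_bound)
  have "0 \<le> c" using bound[of x0] r by force
  then show "0 \<le> 4 * c / r" using r by simp
  fix x :: 'a
  show "norm (f x) \<le> 4 * c / r * norm x"
  proof (cases "x = 0")
    case False
    define t where "t = r / (2 * norm x)"
    have "dist x0 (x0 + t *\<^sub>R x) < r" using False r by (simp add: t_def dist_norm)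
    then have "\<bar>f (x0 + t *\<^sub>R x) - f x0\<bar> \<le> 2 * c"
      using bound[of x0] bound[of "x0 + t *\<^sub>R x"] r by fastforce
    then have "t * \<bar>f x\<bar> \<le> 2 * c"
      using r False by (simp add: blinfun.add_right blinfun.scaleR_right t_def abs_mult)
    then show ?thesis
      using r False by (simp add: t_def field_simps)
  qed simp
qed

lemma weak_star_compact_norm_bounded:
  fixes W :: "('a::banach \<Rightarrow>\<^sub>L real) set"
  assumes cpt: "compactin weak_star_topology W"
  obtains R where "\<And>f. f \<in> W \<Longrightarrow> norm f \<le> R"
proof -
  define F where "F n = {x::'a. \<forall>f\<in>W. \<bar>f x\<bar> \<le> real n}" for n
  have closed_F: "closedin euclidean (F n)" for n
  proof -
    have "F n = (\<Inter>f\<in>W. {x. \<bar>blinfun_apply f x\<bar> \<le> real n})" unfolding F_def by blast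
    moreover have "closed {x. \<bar>blinfun_apply f x\<bar> \<le> real n}" for f :: "'a \<Rightarrow>\<^sub>L real"
      by (intro closed_Collect_le continuous_intros)
    ultimately show ?thesis by (auto simp: closed_closedin[symmetric])
  qed
  have cover: "\<Union>(range F) = UNIV"
  proof (rule sym, rule UNIV_eq_I)
    fix x :: 'a
    obtain B where B: "\<And>f::'a \<Rightarrow>\<^sub>L real. f \<in> W \<Longrightarrow> \<bar>f x\<bar> \<le> B"
      using weak_star_compact_evaluation_bounded[OF cpt] by blast
    have "\<bar>f x\<bar> \<le> real (nat \<lceil>B\<rceil>)" if "f \<in> W" for f :: "'a \<Rightarrow>\<^sub>L real"
      using B[OF that] by linarith
    then have "x \<in> F (nat \<lceil>B\<rceil>)"
      unfolding F_def by blast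
    then show "x \<in> \<Union>(range F)" by blast
  qed
  have "\<exists>n. interior (F n) \<noteq> {}"
  proof (rule ccontr)
    assume "\<nexists>n. interior (F n) \<noteq> {}"
    then have "interior (F n) = {}" for n by blast
    have "euclidean interior_of \<Union>(range F) = {}"
      by (rule Baire_category_alt[OF disjI1[OF completely_metrizable_space_euclidean]])
        (use closed_F \<open>\<And>n. interior (F n) = {}\<close> in auto)
    then show False using cover by simp
  qed
  then obtain n x0 where "x0 \<in> interior (F n)" by blast
  then obtain r where r: "r > 0" "ball x0 r \<subseteq> interior (F n)"
    using open_contains_ball_eq[OF open_interior] by blast
  have "norm f \<le> 4 * real n / r" if "f \<in> W" for f :: "'a \<Rightarrow>\<^sub>L real"
  proof (rule norm_blinfun_le_of_ball[OF r(1)])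
    fix y assume "y \<in> ball x0 r"
    then have "y \<in> F n" using r(2) interior_subset by blast
    then show "\<bar>f y\<bar> \<le> real n" using that unfolding F_def by blast
  qed
  then show thesis by (rule that)
qed

section \<open>A minimax lemma on weak-star compact convex sets\<close>

lemma open_affine_sublevel_weak_star_compact:
  fixes D :: "('a::real_normed_vector \<Rightarrow>\<^sub>L real) set"
  assumes D: "compactin weak_star_topology D"
  shows "open {t::real. \<forall>z\<in>D. t * (C1 - z v1) + (1 - t) * (C2 - z v2) < c}"
    (is "open ?T")
proof (rule openI)
  define h where "h t z = t * (C1 - z v1) + (1 - t) * (C2 - z v2)" for t and z :: "'a \<Rightarrow>\<^sub>L real"
  fix t assume "t \<in> ?T"
  then have t: "\<And>z. z \<in> D \<Longrightarrow> h t z < c" unfolding h_def by blast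
  show "\<exists>d>0. ball t d \<subseteq> ?T"
  proof (cases "D = {}")
    case False
    have h_eq: "h t z = (t * C1 + (1 - t) * C2) - z (t *\<^sub>R v1 + (1 - t) *\<^sub>R v2)" for z
      by (simp add: h_def blinfun.add_right blinfun.diff_right blinfun.scaleR_right algebra_simps)
    obtain z0 where z0: "z0 \<in> D" "\<And>z. z \<in> D \<Longrightarrow> z0 (t *\<^sub>R v1 + (1 - t) *\<^sub>R v2) \<le> z (t *\<^sub>R v1 + (1 - t) *\<^sub>R v2)"
      using weak_star_compact_evaluation_attains_min[OF D False] by blast
    then have m: "h t z \<le> h t z0" if "z \<in> D" for z
      using that unfolding h_eq by force
    obtain B1 where B1: "\<And>z. z \<in> D \<Longrightarrow> \<bar>z v1\<bar> \<le> B1"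
      using weak_star_compact_evaluation_bounded[OF D] by blast
    obtain B2 where B2: "\<And>z. z \<in> D \<Longrightarrow> \<bar>z v2\<bar> \<le> B2"
      using weak_star_compact_evaluation_bounded[OF D] by blast
    define K where "K = \<bar>C1\<bar> + \<bar>C2\<bar> + B1 + B2 + 1"
    have K: "0 < K" using B1[OF z0(1)] B2[OF z0(1)] unfolding K_def by linarith
    have slope: "\<bar>(C1 - z v1) - (C2 - z v2)\<bar> \<le> K" if "z \<in> D" for z
      using B1[OF that] B2[OF that] unfolding K_def by linarith
    define d where "d = (c - h t z0) / K"
    have "d > 0" using t[OF z0(1)] K by (simp add: d_def)
    moreover have "ball t d \<subseteq> ?T"
    proof (intro subsetI CollectI ballI)
      fix t' z assume "t' \<in> ball t d" "z \<in> D"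
      then have "\<bar>t' - t\<bar> * K < d * K" using K by (simp add: dist_real_def abs_minus_commute)
      moreover have "h t' z = h t z + (t' - t) * ((C1 - z v1) - (C2 - z v2))"
        by (simp add: h_def algebra_simps)
      moreover have "(t' - t) * ((C1 - z v1) - (C2 - z v2)) \<le> \<bar>t' - t\<bar> * \<bar>(C1 - z v1) - (C2 - z v2)\<bar>"
        by (metis abs_ge_self abs_mult)
      moreover have "\<bar>t' - t\<bar> * \<bar>(C1 - z v1) - (C2 - z v2)\<bar> \<le> \<bar>t' - t\<bar> * K"
        using slope[OF \<open>z \<in> D\<close>] by (simp add: mult_left_mono)
      ultimately have "h t' z < c"
        using m[OF \<open>z \<in> D\<close>] K by (simp add: d_def)
      then show "t' * (C1 - z v1) + (1 - t') * (C2 - z v2) < c" by (simp add: h_def)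
    qed
    ultimately show ?thesis by blast
  qed (intro exI[of _ 1], auto)
qed

lemma convex_segment_crossing:
  fixes z1 z2 :: "'a::real_normed_vector \<Rightarrow>\<^sub>L real"
  assumes W: "convex W" "z1 \<in> W" "z2 \<in> W"
    and H: "\<And>z. z \<in> W \<Longrightarrow> C1 - z v1 < c \<or> C2 - z v2 < c"
    and z1: "c \<le> C1 - z1 v1" and z2: "c \<le> C2 - z2 v2"
  shows "t * (C1 - z1 v1) + (1 - t) * (C2 - z1 v2) < c \<or> t * (C1 - z2 v1) + (1 - t) * (C2 - z2 v2) < c"
proof (rule ccontr)
  define g1 where "g1 z = C1 - z v1" for z :: "'a \<Rightarrow>\<^sub>L real"
  define g2 where "g2 z = C2 - z v2" for z :: "'a \<Rightarrow>\<^sub>L real"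
  define h where "h z = t * g1 z + (1 - t) * g2 z" for z
  assume "\<not> ?thesis"
  then have h: "c \<le> h z1" "c \<le> h z2" unfolding h_def g1_def g2_def by auto
  have affine: "g1 ((1 - r) *\<^sub>R z1 + r *\<^sub>R z2) = (1 - r) * g1 z1 + r * g1 z2"
    "g2 ((1 - r) *\<^sub>R z1 + r *\<^sub>R z2) = (1 - r) * g2 z1 + r * g2 z2" for r
    by (simp_all add: g1_def g2_def blinfun.add_left blinfun.scaleR_left blinfun.diff_left algebra_simps)
  define p0 where "p0 = g1 z1 - g2 z1"
  define p1 where "p1 = g1 z2 - g2 z2"
  have "0 < p0" "p1 < 0"
    using H[OF W(2)] H[OF W(3)] z1 z2 unfolding p0_def p1_def g1_def g2_def by auto
  define r where "r = p0 / (p0 - p1)"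
  have r: "0 < r" "r < 1" "r * (p0 - p1) = p0"
    using \<open>0 < p0\<close> \<open>p1 < 0\<close> by (auto simp: r_def field_simps)
  define zr where "zr = (1 - r) *\<^sub>R z1 + r *\<^sub>R z2"
  have "zr \<in> W" unfolding zr_def using convexD[OF W, of "1 - r" r] r by simp
  have "g1 zr - g2 zr = p0 - r * (p0 - p1)"
    unfolding zr_def affine p0_def p1_def by (simp add: algebra_simps)
  then have crossing: "g1 zr = g2 zr" using r by simp
  have "(1 - r) * c + r * c \<le> (1 - r) * h z1 + r * h z2"
    using h r by (intro add_mono mult_left_mono) auto
  also have "\<dots> = h zr"
    unfolding h_def zr_def affine by (simp add: algebra_simps)
  finally have "c \<le> g1 zr" "c \<le> g2 zr" using crossing by (simp_all add: h_def algebra_simps)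
  then show False using H[OF \<open>zr \<in> W\<close>] unfolding g1_def g2_def by linarith
qed

lemma weak_star_minimax_two:
  fixes W :: "('a::real_normed_vector \<Rightarrow>\<^sub>L real) set"
  assumes cpt: "compactin weak_star_topology W" and cvx: "convex W"
    and H: "\<And>z. z \<in> W \<Longrightarrow> C1 - z v1 < c \<or> C2 - z v2 < c"
  obtains t where "0 \<le> t" "t \<le> 1"
    "\<And>z. z \<in> W \<Longrightarrow> t * (C1 - z v1) + (1 - t) * (C2 - z v2) < c"
proof -
  define h where "h t z = t * (C1 - z v1) + (1 - t) * (C2 - z v2)" for t and z :: "'a \<Rightarrow>\<^sub>L real"
  define A where "A = {z \<in> W. c \<le> C1 - z v1}"
  define B where "B = {z \<in> W. c \<le> C2 - z v2}"
  have "A = {z::'a \<Rightarrow>\<^sub>L real. z v1 \<le> C1 - c} \<inter> W" "B = {z::'a \<Rightarrow>\<^sub>L real. z v2 \<le> C2 - c} \<inter> W"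
    unfolding A_def B_def by auto
  then have "compactin weak_star_topology A" "compactin weak_star_topology B"
    by (simp_all add: closed_Int_compactin[OF closedin_weak_star_evaluation_le cpt])
  text \<open>A parameter in \<open>TA \<inter> TB\<close> is good on \<open>A \<union> B\<close>, and every \<open>t \<in> {0..1}\<close> is good
    off \<open>A \<union> B\<close>; connectedness of \<open>{0..1}\<close> forces \<open>TA \<inter> TB\<close> to meet it.\<close>
  define TA where "TA = {t. \<forall>z\<in>B. h t z < c}"
  define TB where "TB = {t. \<forall>z\<in>A. h t z < c}"
  have "open TA" "open TB"
    unfolding TA_def TB_def h_def
    by (simp_all add: open_affine_sublevel_weak_star_compact \<open>compactin weak_star_topology A\<close>
      \<open>compactin weak_star_topology B\<close>)
  have "{0..1} \<subseteq> TA \<union> TB"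
  proof
    fix t :: real
    have False if "z1 \<in> A" "c \<le> h t z1" "z2 \<in> B" "c \<le> h t z2" for z1 z2
    proof -
      have z: "z1 \<in> W" "c \<le> C1 - z1 v1" "z2 \<in> W" "c \<le> C2 - z2 v2"
        using that(1,3) unfolding A_def B_def by auto
      show False
        using convex_segment_crossing[OF cvx z(1,3) H z(2,4), of t] that(2,4) unfolding h_def by linarith
    qed
    then show "t \<in> TA \<union> TB" unfolding TA_def TB_def by (auto simp: not_less) (meson not_less)
  qed
  have "1 \<in> TA"
    unfolding TA_def
  proof (intro CollectI ballI)
    fix z assume "z \<in> B"
    then show "h 1 z < c" using H[of z] unfolding B_def h_def by auto
  qed
  have "0 \<in> TB"
    unfolding TB_def
  proof (intro CollectI ballI)
    fix z assume "z \<in> A"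
    then show "h 0 z < c" using H[of z] unfolding A_def h_def by auto
  qed
  have "TA \<inter> TB \<inter> {0..1} \<noteq> {}"
  proof
    assume "TA \<inter> TB \<inter> {0..1} = {}"
    then have "TA \<inter> {0..1} = {} \<or> TB \<inter> {0..1} = {}"
      by (rule connectedD[OF connected_Icc \<open>open TA\<close> \<open>open TB\<close> _ \<open>{0..1} \<subseteq> TA \<union> TB\<close>])
    then show False using \<open>1 \<in> TA\<close> \<open>0 \<in> TB\<close> by auto
  qed
  then obtain t where t: "t \<in> {0..1}" "t \<in> TA" "t \<in> TB" by blast
  have "h t z < c" if "z \<in> W" for z
  proof (cases "z \<in> A \<union> B")
    case False
    then have "C1 - z v1 < c" "C2 - z v2 < c" using that unfolding A_def B_def by auto
    then show ?thesis using t(1) unfolding h_def by (intro convex_bound_lt) auto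
  qed (use t in \<open>auto simp: TA_def TB_def\<close>)
  then show thesis using t(1) unfolding h_def by (intro that[of t]) auto
qed

lemma convex_evaluation_le: "convex {z::'a::real_normed_vector \<Rightarrow>\<^sub>L real. z v \<le> k}"
  unfolding convex_def
  by (auto simp: blinfun.add_left blinfun.scaleR_left intro!: convex_bound_le)

lemma weak_star_minimax_finite:
  fixes C :: "'i \<Rightarrow> real" and v :: "'i \<Rightarrow> 'a::real_normed_vector" and W :: "('a \<Rightarrow>\<^sub>L real) set"
  assumes "finite F" "F \<noteq> {}" "compactin weak_star_topology W" "convex W"
    and "\<And>z. z \<in> W \<Longrightarrow> \<exists>i\<in>F. C i - z (v i) < c"
  shows "\<exists>l. (\<forall>i\<in>F. 0 \<le> l i) \<and> sum l F = 1 \<and> (\<forall>z\<in>W. (\<Sum>i\<in>F. l i * (C i - z (v i))) < c)"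
  using assms
proof (induct F arbitrary: W rule: finite_ne_induct)
  case (singleton j)
  then show ?case by (intro exI[of _ "\<lambda>_. 1"]) auto
next
  case (insert j F)
  define W' where "W' = {z::'a \<Rightarrow>\<^sub>L real. z (v j) \<le> C j - c} \<inter> W"
  have "compactin weak_star_topology W'"
    unfolding W'_def by (rule closed_Int_compactin[OF closedin_weak_star_evaluation_le insert.prems(1)])
  moreover have "convex W'"
    unfolding W'_def by (rule convex_Int[OF convex_evaluation_le insert.prems(2)])
  moreover have "\<exists>i\<in>F. C i - z (v i) < c" if "z \<in> W'" for z
    using insert.prems(3)[of z] that unfolding W'_def by auto
  ultimately obtain \<mu> where \<mu>: "\<forall>i\<in>F. 0 \<le> \<mu> i" "sum \<mu> F = 1"
    "\<forall>z\<in>W'. (\<Sum>i\<in>F. \<mu> i * (C i - z (v i))) < c"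
    using insert.hyps(4) by blast
  define C' where "C' = (\<Sum>i\<in>F. \<mu> i * C i)"
  define v' where "v' = (\<Sum>i\<in>F. \<mu> i *\<^sub>R v i)"
  have \<mu>_sum: "(\<Sum>i\<in>F. \<mu> i * (C i - z (v i))) = C' - z v'" for z :: "'a \<Rightarrow>\<^sub>L real"
    unfolding C'_def v'_def blinfun.sum_right blinfun.scaleR_right
    by (simp add: algebra_simps sum_subtractf)
  have "C' - z v' < c \<or> C j - z (v j) < c" if "z \<in> W" for z
    using \<mu>(3) that \<mu>_sum unfolding W'_def by force
  then obtain t where t: "0 \<le> t" "t \<le> 1"
    "\<And>z. z \<in> W \<Longrightarrow> t * (C' - z v') + (1 - t) * (C j - z (v j)) < c"
    using weak_star_minimax_two[OF insert.prems(1,2)] by blast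
  define l where "l i = (if i = j then 1 - t else t * \<mu> i)" for i
  have l_sum: "(\<Sum>i\<in>F. l i * g i) = t * (\<Sum>i\<in>F. \<mu> i * g i)" for g :: "'i \<Rightarrow> real"
    using insert.hyps(3) unfolding l_def sum_distrib_left
    by (intro sum.cong) auto
  show ?case
  proof (intro exI[of _ l] conjI ballI)
    show "0 \<le> l i" if "i \<in> insert j F" for i
      using that t \<mu>(1) unfolding l_def by auto
    show "sum l (insert j F) = 1"
      using l_sum[of "\<lambda>_. 1"] \<mu>(2) insert.hyps(1,3) by (simp add: l_def)
    show "(\<Sum>i\<in>insert j F. l i * (C i - z (v i))) < c" if "z \<in> W" for z
    proof -
      have "(\<Sum>i\<in>insert j F. l i * (C i - z (v i))) = (1 - t) * (C j - z (v j)) + t * (C' - z v')"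
        using l_sum[of "\<lambda>i. C i - z (v i)"] \<mu>_sum[of z] insert.hyps(1,3) by (simp add: l_def)
      then show ?thesis using t(3)[OF that] by linarith
    qed
  qed
qed

lemma weak_star_minimax:
  fixes C :: "'i \<Rightarrow> real" and v :: "'i \<Rightarrow> 'a::real_normed_vector" and W :: "('a \<Rightarrow>\<^sub>L real) set"
  assumes cpt: "compactin weak_star_topology W" and "convex W" "W \<noteq> {}"
    and cover: "\<And>z. z \<in> W \<Longrightarrow> \<exists>i\<in>I. C i - z (v i) < c"
  obtains F l where "finite F" "F \<subseteq> I" "F \<noteq> {}" "\<And>i. i \<in> F \<Longrightarrow> 0 \<le> l i" "sum l F = 1"
    "\<And>z. z \<in> W \<Longrightarrow> (\<Sum>i\<in>F. l i * (C i - z (v i))) < c"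
proof -
  define U where "U i = {z::'a \<Rightarrow>\<^sub>L real. z (v i) \<in> {C i - c<..}}" for i
  have "openin weak_star_topology (U i)" for i
    unfolding U_def by (rule openin_weak_star_evaluation) simp
  moreover have "W \<subseteq> \<Union>(U ` I)"
    using cover unfolding U_def by force
  ultimately obtain F where F: "finite F" "F \<subseteq> I" "W \<subseteq> \<Union>(U ` F)"
    using cpt unfolding compactin_def by (metis (no_types, lifting) finite_subset_image imageE)
  have cover_F: "\<exists>i\<in>F. C i - z (v i) < c" if "z \<in> W" for z
    using F(3) that unfolding U_def by force
  then have "F \<noteq> {}" using \<open>W \<noteq> {}\<close> by blast
  then show thesis
    using weak_star_minimax_finite[OF F(1) _ cpt \<open>convex W\<close> cover_F] that F(1,2) by blast
qed

lemma infdist_lessE: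
  assumes "A \<noteq> {}" "infdist x A < e"
  obtains a where "a \<in> A" "dist x a < e"
  using cInf_lessD[of "(\<lambda>a. dist x a) ` A" e] assms unfolding infdist_notempty[OF assms(1)] by auto

lemma convex_on_infdist:
  fixes W :: "'b::real_normed_vector set"
  assumes cvx: "convex W" and ne: "W \<noteq> {}"
  shows "convex_on UNIV (\<lambda>x. infdist x W)"
proof (rule convex_onI)
  fix t :: real and x y :: 'b assume t: "0 < t" "t < 1"
  show "infdist ((1 - t) *\<^sub>R x + t *\<^sub>R y) W \<le> (1 - t) * infdist x W + t * infdist y W"
  proof (rule field_le_epsilon)
    fix e :: real assume "0 < e"
    obtain a where a: "a \<in> W" "dist x a < infdist x W + e"
      using infdist_lessE[OF ne, of x "infdist x W + e"] \<open>0 < e\<close> by auto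
    obtain b where b: "b \<in> W" "dist y b < infdist y W + e"
      using infdist_lessE[OF ne, of y "infdist y W + e"] \<open>0 < e\<close> by auto
    have "(1 - t) *\<^sub>R a + t *\<^sub>R b \<in> W" using convexD[OF cvx a(1) b(1), of "1 - t" t] t by simp
    then have "infdist ((1 - t) *\<^sub>R x + t *\<^sub>R y) W \<le> dist ((1 - t) *\<^sub>R x + t *\<^sub>R y) ((1 - t) *\<^sub>R a + t *\<^sub>R b)"
      by (rule infdist_le)
    also have "\<dots> = norm ((1 - t) *\<^sub>R (x - a) + t *\<^sub>R (y - b))"
      by (simp add: dist_norm algebra_simps)
    also have "\<dots> \<le> (1 - t) * dist x a + t * dist y b"
      using norm_triangle_ineq[of "(1 - t) *\<^sub>R (x - a)" "t *\<^sub>R (y - b)"] t by (simp add: dist_norm)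
    also have "\<dots> \<le> (1 - t) * (infdist x W + e) + t * (infdist y W + e)"
      using a(2) b(2) t by (intro add_mono mult_left_mono) auto
    finally show "infdist ((1 - t) *\<^sub>R x + t *\<^sub>R y) W \<le> (1 - t) * infdist x W + t * infdist y W + e"
      by (simp add: algebra_simps)
  qed
qed simp

lemma convex_on_power2_nonneg:
  fixes g :: "'b::real_vector \<Rightarrow> real"
  assumes cg: "convex_on UNIV g" and nn: "\<And>x. 0 \<le> g x"
  shows "convex_on UNIV (\<lambda>x. (g x)\<^sup>2)"
proof (rule convex_onI)
  fix t :: real and x y :: 'b assume t: "0 < t" "t < 1"
  have "g ((1 - t) *\<^sub>R x + t *\<^sub>R y) \<le> (1 - t) * g x + t * g y"
    using convex_onD[OF cg, of t x y] t by simp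
  then have "(g ((1 - t) *\<^sub>R x + t *\<^sub>R y))\<^sup>2 \<le> ((1 - t) * g x + t * g y)\<^sup>2"
    using nn by (intro power_mono) auto
  also have "\<dots> = (1 - t) * (g x)\<^sup>2 + t * (g y)\<^sup>2 - t * (1 - t) * (g x - g y)\<^sup>2"
    by (simp add: power2_eq_square algebra_simps)
  also have "\<dots> \<le> (1 - t) * (g x)\<^sup>2 + t * (g y)\<^sup>2"
    using t by simp
  finally show "(g ((1 - t) *\<^sub>R x + t *\<^sub>R y))\<^sup>2 \<le> (1 - t) * (g x)\<^sup>2 + t * (g y)\<^sup>2" .
qed simp

lemma convex_on_norm_diff_power2: "convex_on UNIV (\<lambda>x::'b::real_normed_vector. (norm (x - w))\<^sup>2)"
proof (rule convex_on_power2_nonneg)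
  show "convex_on UNIV (\<lambda>x::'b. norm (x - w))"
    using convex_on_dist[of UNIV w] by (simp add: dist_norm norm_minus_commute)
qed simp

lemma norm_convex_combination_le:
  fixes x :: "'i \<Rightarrow> 'b::real_normed_vector"
  assumes "\<And>i. i \<in> F \<Longrightarrow> 0 \<le> l i" "sum l F = 1" "\<And>i. i \<in> F \<Longrightarrow> norm (x i) \<le> B"
  shows "norm (\<Sum>i\<in>F. l i *\<^sub>R x i) \<le> B"
proof -
  have "norm (\<Sum>i\<in>F. l i *\<^sub>R x i) \<le> (\<Sum>i\<in>F. l i * norm (x i))"
    using norm_sum[of "\<lambda>i. l i *\<^sub>R x i" F] assms(1) by simp
  also have "\<dots> \<le> (\<Sum>i\<in>F. l i * B)"
    using assms(1,3) by (intro sum_mono mult_left_mono) auto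
  also have "\<dots> = B"
    unfolding sum_distrib_right[symmetric] assms(2) by simp
  finally show ?thesis .
qed

section \<open>Monotone graphs and quasidensity\<close>

definition q_L :: "'a::real_normed_vector \<times> ('a \<Rightarrow>\<^sub>L real) \<Rightarrow> real" where
  "q_L p = snd p (fst p)"

definition r_L :: "'a::real_normed_vector \<times> ('a \<Rightarrow>\<^sub>L real) \<Rightarrow> real" where
  "r_L p = (norm (fst p))\<^sup>2 / 2 + (norm (snd p))\<^sup>2 / 2 + q_L p"

lemma q_L_add: "q_L (a + b) = q_L a + snd a (fst b) + snd b (fst a) + q_L b"
  by (simp add: q_L_def blinfun.add_left blinfun.add_right)

lemma q_L_diff: "q_L (a - b) = q_L a - snd a (fst b) - snd b (fst a) + q_L b"
  by (simp add: q_L_def blinfun.diff_left blinfun.diff_right)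

lemma q_L_diff_commute: "q_L (a - b) = q_L (b - a)"
  by (simp add: q_L_diff)

lemma abs_q_L_le: "\<bar>q_L p\<bar> \<le> norm (fst p) * norm (snd p)"
  using norm_blinfun[of "snd p" "fst p"] by (simp add: q_L_def mult.commute)

lemma r_L_nonneg: "0 \<le> r_L p"
proof -
  have "0 \<le> (norm (fst p) - norm (snd p))\<^sup>2 / 2" by simp
  also have "\<dots> = (norm (fst p))\<^sup>2 / 2 + (norm (snd p))\<^sup>2 / 2 - norm (fst p) * norm (snd p)"
    by (simp add: power2_eq_square field_simps)
  finally show ?thesis
    using abs_q_L_le[of p] unfolding r_L_def by linarith
qed

lemma monotone_graph_q_L:
  assumes "monotone_graph G" "a \<in> G" "b \<in> G"
  shows "0 \<le> q_L (a - b)"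
  using assms unfolding monotone_graph_def q_L_def by (cases a, cases b) fastforce

lemma quasidense_iff_r_L:
  "quasidense G \<longleftrightarrow> (\<forall>y. (INF a\<in>G. r_L (a - y)) \<le> 0)"
  unfolding quasidense_def r_L_def q_L_def by (simp add: split_paired_All)

lemma quasidenseD:
  assumes "quasidense G" "G \<noteq> {}" "\<epsilon> > 0"
  obtains a where "a \<in> G" "r_L (a - y) < \<epsilon>"
proof -
  have "(INF a\<in>G. r_L (a - y)) \<le> 0"
    using assms(1) unfolding quasidense_iff_r_L by blast
  then have "(INF a\<in>G. r_L (a - y)) < \<epsilon>"
    using assms(3) by linarith
  then obtain a where "a \<in> G" "r_L (a - y) < \<epsilon>"
    using cInf_lessD[of "(\<lambda>a. r_L (a - y)) ` G" \<epsilon>] assms(2) by auto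
  then show thesis by (rule that)
qed

lemma quasidenseI:
  assumes "\<And>y \<epsilon>. \<epsilon> > 0 \<Longrightarrow> \<exists>a\<in>G. r_L (a - y) < \<epsilon>"
  shows "quasidense G"
  unfolding quasidense_iff_r_L
proof (intro allI, rule field_le_epsilon)
  fix y and \<epsilon> :: real assume "0 < \<epsilon>"
  then obtain a where "a \<in> G" "r_L (a - y) < \<epsilon>" using assms by blast
  moreover have "bdd_below ((\<lambda>a. r_L (a - y)) ` G)"
  proof (rule bdd_belowI)
    fix x assume "x \<in> (\<lambda>a. r_L (a - y)) ` G"
    then show "0 \<le> x" using r_L_nonneg by blast
  qed
  ultimately show "(INF a\<in>G. r_L (a - y)) \<le> 0 + \<epsilon>"
    using cINF_lower[of "\<lambda>a. r_L (a - y)" G a] by linarith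
qed

definition q_L_defect :: "('a \<times> ('a \<Rightarrow>\<^sub>L real) \<Rightarrow> real) \<Rightarrow> ('a::real_normed_vector \<times> ('a \<Rightarrow>\<^sub>L real)) set \<Rightarrow> real" where
  "q_L_defect l F = (\<Sum>a\<in>F. l a * q_L a) - q_L (\<Sum>a\<in>F. l a *\<^sub>R a)"

lemma sum_q_L_diff:
  assumes "sum l F = 1"
  shows "(\<Sum>a\<in>F. l a * q_L (a - y)) = q_L_defect l F + q_L ((\<Sum>a\<in>F. l a *\<^sub>R a) - y)"
proof -
  have "(\<Sum>a\<in>F. l a * c) = c" for c using assms by (simp add: sum_distrib_right[symmetric])
  moreover have "snd (\<Sum>a\<in>F. l a *\<^sub>R a) x = (\<Sum>a\<in>F. l a * snd a x)" for x
    by (simp add: snd_sum blinfun.sum_left blinfun.scaleR_left)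
  moreover have "f (fst (\<Sum>a\<in>F. l a *\<^sub>R a)) = (\<Sum>a\<in>F. l a * f (fst a))" for f :: "'a \<Rightarrow>\<^sub>L real"
    by (simp add: fst_sum blinfun.sum_right blinfun.scaleR_right)
  ultimately show ?thesis
    unfolding q_L_defect_def q_L_diff
    by (simp add: algebra_simps sum.distrib sum_subtractf sum_distrib_left)
qed

lemma monotone_graph_q_L_defect:
  assumes mono: "monotone_graph G" and F: "F \<subseteq> G" "\<And>a. a \<in> F \<Longrightarrow> 0 \<le> l a" "sum l F = 1"
    and "b \<in> G"
  shows "- q_L_defect l F \<le> q_L (b - (\<Sum>a\<in>F. l a *\<^sub>R a))"
proof -
  have "0 \<le> (\<Sum>a\<in>F. l a * q_L (a - b))"
  proof (rule sum_nonneg)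
    fix a assume "a \<in> F"
    then have "a \<in> G" using F(1) by blast
    then show "0 \<le> l a * q_L (a - b)"
      using F(2)[OF \<open>a \<in> F\<close>] monotone_graph_q_L[OF mono _ \<open>b \<in> G\<close>] by simp
  qed
  then show ?thesis
    using sum_q_L_diff[OF F(3), of b] q_L_diff_commute[of "\<Sum>a\<in>F. l a *\<^sub>R a" b] by linarith
qed

lemma q_L_defect_nonneg:
  assumes mono: "monotone_graph G" and F: "F \<subseteq> G" "\<And>a. a \<in> F \<Longrightarrow> 0 \<le> l a" "sum l F = 1"
  shows "0 \<le> q_L_defect l F"
proof -
  let ?m = "\<Sum>a\<in>F. l a *\<^sub>R a"
  have "- q_L_defect l F = (\<Sum>a\<in>F. l a * - q_L_defect l F)"
    unfolding sum_distrib_right[symmetric] F(3) by simp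
  also have "\<dots> \<le> (\<Sum>a\<in>F. l a * q_L (a - ?m))"
    using F monotone_graph_q_L_defect[OF mono F] by (intro sum_mono mult_left_mono) auto
  also have "\<dots> = q_L_defect l F"
    unfolding sum_q_L_diff[OF F(3)] by (simp add: q_L_def)
  finally show ?thesis by linarith
qed

section \<open>The approximation property\<close>

definition gap :: "('a::real_normed_vector \<Rightarrow>\<^sub>L real) set \<Rightarrow> 'a \<Rightarrow> 'a \<times> ('a \<Rightarrow>\<^sub>L real) \<Rightarrow> ('a \<Rightarrow>\<^sub>L real) \<Rightarrow> real" where
  "gap W w p z = (norm (fst p - w))\<^sup>2 / 2 + (infdist (snd p) W)\<^sup>2 / 2 + q_L (p - (w, z))"

lemma gap_affine: "gap W w p z = gap W w p 0 - z (fst p - w)"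
  by (simp add: gap_def q_L_def blinfun.diff_left)

lemma gap_le_r_L:
  assumes "z \<in> W"
  shows "gap W w p z \<le> r_L (p - (w, z))"
proof -
  have "infdist (snd p) W \<le> norm (snd p - z)"
    using infdist_le[OF assms] by (simp add: dist_norm)
  then have "(infdist (snd p) W)\<^sup>2 \<le> (norm (snd p - z))\<^sup>2"
    using infdist_nonneg by (intro power_mono) auto
  then show ?thesis by (simp add: gap_def r_L_def)
qed

lemma gap_singleton: "gap {z} w p z = r_L (p - (w, z))"
  by (simp add: gap_def r_L_def dist_norm)

lemma gap_convex_combination:
  fixes F :: "('a::real_normed_vector \<times> ('a \<Rightarrow>\<^sub>L real)) set"
  assumes F: "finite F" "F \<noteq> {}" "\<And>a. a \<in> F \<Longrightarrow> 0 \<le> l a" "sum l F = 1"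
    and W: "convex W" "W \<noteq> {}"
  shows "gap W w (\<Sum>a\<in>F. l a *\<^sub>R a) z + q_L_defect l F \<le> (\<Sum>a\<in>F. l a * gap W w a z)"
proof -
  let ?m = "\<Sum>a\<in>F. l a *\<^sub>R a"
  have "(norm (fst ?m - w))\<^sup>2 \<le> (\<Sum>a\<in>F. l a * (norm (fst a - w))\<^sup>2)"
    using convex_on_sum[OF F(1,2) convex_on_norm_diff_power2 F(4), of fst] F(3)
    by (simp add: fst_sum)
  moreover have "(infdist (snd ?m) W)\<^sup>2 \<le> (\<Sum>a\<in>F. l a * (infdist (snd a) W)\<^sup>2)"
    using convex_on_sum[OF F(1,2) convex_on_power2_nonneg[OF convex_on_infdist[OF W] infdist_nonneg] F(4), of snd] F(3)
    by (simp add: snd_sum)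
  moreover have "(\<Sum>a\<in>F. l a * gap W w a z) = (\<Sum>a\<in>F. l a * (norm (fst a - w))\<^sup>2) / 2
      + (\<Sum>a\<in>F. l a * (infdist (snd a) W)\<^sup>2) / 2 + (\<Sum>a\<in>F. l a * q_L (a - (w, z)))"
    by (simp add: gap_def sum.distrib sum_divide_distrib algebra_simps)
  ultimately show ?thesis
    unfolding sum_q_L_diff[OF F(4)] gap_def by linarith
qed

lemma gap_exists_gt:
  assumes "W \<noteq> {}" "e > 0"
  obtains z where "z \<in> W" "- e < gap W w p z"
proof -
  define A where "A = norm (fst p - w)"
  define d where "d = infdist (snd p) W"
  define \<theta> where "\<theta> = e / (A + 1)"
  have "0 \<le> A" by (simp add: A_def)
  then have "\<theta> > 0" "\<theta> * A < e"
    using assms(2) by (simp_all add: \<theta>_def field_simps)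
  obtain z where z: "z \<in> W" "dist (snd p) z < d + \<theta>"
    using infdist_lessE[OF assms(1), of "snd p" "d + \<theta>"] \<open>\<theta> > 0\<close> unfolding d_def by auto
  have "- (norm (snd p - z) * A) \<le> q_L (p - (w, z))"
    using abs_q_L_le[of "p - (w, z)"] by (simp add: A_def mult.commute)
  moreover have "norm (snd p - z) * A \<le> (d + \<theta>) * A"
    using z(2) \<open>0 \<le> A\<close> by (intro mult_right_mono) (auto simp: dist_norm)
  moreover have "0 \<le> (A - d)\<^sup>2 / 2" by simp
  moreover have "(A - d)\<^sup>2 / 2 = A\<^sup>2 / 2 + d\<^sup>2 / 2 - d * A"
    by (simp add: power2_eq_square field_simps)
  ultimately have "- e < gap W w p z"
    using \<open>\<theta> * A < e\<close> unfolding gap_def A_def[symmetric] d_def[symmetric] by (simp add: algebra_simps)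
  with z(1) show thesis by (rule that)
qed

lemma gap_add_le:
  assumes "norm (fst p) \<le> \<rho>" "norm (snd p) \<le> \<rho>"
  shows "gap W w (m + p) z
    \<le> gap W w m z + \<rho> * (2 * norm (fst m - w) + infdist (snd m) W + norm (snd m - z) + \<rho>) + q_L p"
proof -
  define A where "A = norm (fst m - w)"
  define d where "d = infdist (snd m) W"
  have n1: "norm (fst m + fst p - w) \<le> A + \<rho>"
    using norm_triangle_ineq[of "fst m - w" "fst p"] assms(1) by (simp add: A_def algebra_simps)
  have sq1: "(norm (fst m + fst p - w))\<^sup>2 \<le> A\<^sup>2 + 2 * \<rho> * A + \<rho>\<^sup>2"
    using power_mono[OF n1 norm_ge_zero, of 2] by (simp add: power2_eq_square algebra_simps)
  have n2: "infdist (snd m + snd p) W \<le> d + \<rho>"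
    using infdist_triangle[of "snd m + snd p" W "snd m"] assms(2) by (simp add: d_def dist_norm)
  have sq2: "(infdist (snd m + snd p) W)\<^sup>2 \<le> d\<^sup>2 + 2 * \<rho> * d + \<rho>\<^sup>2"
    using power_mono[OF n2 infdist_nonneg, of 2] by (simp add: power2_eq_square algebra_simps)
  have "q_L (m + p - (w, z)) = q_L (m - (w, z)) + (snd m - z) (fst p) + snd p (fst m - w) + q_L p"
    using q_L_add[of "m - (w, z)" p] by (simp add: algebra_simps)
  moreover have "(snd m - z) (fst p) \<le> norm (snd m - z) * \<rho>"
    using norm_blinfun[of "snd m - z" "fst p"] assms(1)
    by (smt (verit, best) mult_left_mono norm_ge_zero real_norm_def abs_le_iff)
  moreover have "snd p (fst m - w) \<le> \<rho> * A"
    using norm_blinfun[of "snd p" "fst m - w"] assms(2)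
    by (smt (verit, best) A_def mult_right_mono norm_ge_zero real_norm_def abs_le_iff)
  ultimately show ?thesis
    using sq1 sq2 unfolding gap_def A_def[symmetric] d_def[symmetric]
    by (simp add: algebra_simps power2_eq_square)
qed

lemma gap_add_le_bounded:
  assumes "z \<in> W" "norm z \<le> R"
    and m: "norm (fst m - w) \<le> M" "norm (snd m) \<le> M + R"
    and p: "norm (fst p) \<le> \<rho>" "norm (snd p) \<le> \<rho>" and "\<rho> \<le> 1"
  shows "gap W w (m + p) z \<le> gap W w m z + \<rho> * (4 * M + 4 * R + 1) + q_L p"
proof -
  have "norm (snd m - z) \<le> M + 2 * R"
    using norm_triangle_ineq4[of "snd m" z] m(2) \<open>norm z \<le> R\<close> by linarith
  moreover have "infdist (snd m) W \<le> norm (snd m - z)"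
    using infdist_le[OF \<open>z \<in> W\<close>] by (simp add: dist_norm)
  moreover have "0 \<le> \<rho>" using p(1) norm_ge_zero[of "fst p"] by linarith
  ultimately have "\<rho> * (2 * norm (fst m - w) + infdist (snd m) W + norm (snd m - z) + \<rho>)
      \<le> \<rho> * (4 * M + 4 * R + 1)"
    using m(1) \<open>\<rho> \<le> 1\<close> by (intro mult_left_mono) auto
  then show ?thesis using gap_add_le[OF p, of W w m z] by linarith
qed

lemma half_squares_bound:
  fixes X Y P Q :: real
  assumes "0 \<le> P" "0 \<le> Q" "X\<^sup>2 / 2 + Y\<^sup>2 / 2 < 1 + Q * X + P * Y + Q * P"
  shows "X \<le> 2 * (Q + P + 1)" "Y \<le> 2 * (Q + P + 1)"
proof -
  have "(X - Q)\<^sup>2 + (Y - P)\<^sup>2 < (Q + P + 2)\<^sup>2"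
    using assms by (simp add: power2_eq_square algebra_simps)
  then have "(X - Q)\<^sup>2 < (Q + P + 2)\<^sup>2" "(Y - P)\<^sup>2 < (Q + P + 2)\<^sup>2"
    by (smt (verit) zero_le_power2)+
  then have "\<bar>X - Q\<bar> < Q + P + 2" "\<bar>Y - P\<bar> < Q + P + 2"
    using assms(1,2) by (simp_all add: power2_less_imp_less abs_le_square_iff[symmetric] abs_square_less_1)
  then show "X \<le> 2 * (Q + P + 1)" "Y \<le> 2 * (Q + P + 1)"
    using assms(1,2) by (simp_all add: abs_less_iff)
qed

lemma quasidense_monotone_localized:
  assumes qd: "quasidense G" and mono: "monotone_graph G" and b: "b \<in> G"
    and \<epsilon>: "0 < \<epsilon>" "\<epsilon> \<le> 1"
  obtains a where "a \<in> G" "r_L (a - y) < \<epsilon>"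
    "norm (fst (a - y)) \<le> 2 * (norm (snd (y - b)) + norm (fst (y - b)) + 1)"
    "norm (snd (a - y)) \<le> 2 * (norm (snd (y - b)) + norm (fst (y - b)) + 1)"
proof -
  obtain a where a: "a \<in> G" "r_L (a - y) < \<epsilon>"
    using quasidenseD[OF qd _ \<epsilon>(1)] b by blast
  define u where "u = a - y"
  define v where "v = y - b"
  have "0 \<le> q_L (u + v)"
    using monotone_graph_q_L[OF mono a(1) b] by (simp add: u_def v_def)
  moreover have "snd u (fst v) \<le> norm (snd u) * norm (fst v)"
    "snd v (fst u) \<le> norm (snd v) * norm (fst u)" "q_L v \<le> norm (fst v) * norm (snd v)"
    using norm_blinfun[of "snd u" "fst v"] norm_blinfun[of "snd v" "fst u"] abs_q_L_le[of v] by auto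
  ultimately have "(norm (fst u))\<^sup>2 / 2 + (norm (snd u))\<^sup>2 / 2
      < 1 + norm (snd v) * norm (fst u) + norm (fst v) * norm (snd u) + norm (snd v) * norm (fst v)"
    using a(2) \<epsilon>(2) unfolding u_def[symmetric] r_L_def q_L_add by (simp add: algebra_simps)
  then have "norm (fst u) \<le> 2 * (norm (snd v) + norm (fst v) + 1)"
    "norm (snd u) \<le> 2 * (norm (snd v) + norm (fst v) + 1)"
    by (rule half_squares_bound[OF norm_ge_zero norm_ge_zero])+
  with a show thesis unfolding u_def v_def by (rule that)
qed

lemma monotone_weak_star_convex_approx:
  fixes G :: "('a::real_normed_vector \<times> ('a \<Rightarrow>\<^sub>L real)) set"
  assumes mono: "monotone_graph G" and "0 < \<epsilon>"
    and W: "compactin weak_star_topology W" "convex W" "W \<noteq> {}"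
    and near: "\<forall>z\<in>W. \<exists>a\<in>G. norm (fst a - w) \<le> M \<and> norm (snd a) \<le> N \<and> gap W w a z < \<epsilon>"
  obtains m \<delta> where "norm (fst m - w) \<le> M" "norm (snd m) \<le> N" "0 \<le> \<delta>" "\<delta> < 2 * \<epsilon>"
    "\<And>z. z \<in> W \<Longrightarrow> gap W w m z + \<delta> < \<epsilon>" "\<And>b. b \<in> G \<Longrightarrow> - \<delta> \<le> q_L (b - m)"
proof -
  define I where "I = {a \<in> G. norm (fst a - w) \<le> M \<and> norm (snd a) \<le> N}"
  have cover: "\<exists>a\<in>I. gap W w a 0 - z (fst a - w) < \<epsilon>" if z: "z \<in> W" for z
  proof -
    obtain a where "a \<in> G" "norm (fst a - w) \<le> M" "norm (snd a) \<le> N" "gap W w a z < \<epsilon>"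
      using near z by blast
    then have "a \<in> I" "gap W w a 0 - z (fst a - w) < \<epsilon>"
      unfolding I_def gap_affine[of W w a z] by simp_all
    then show ?thesis by blast
  qed
  obtain F l where F: "finite F" "F \<subseteq> I" "F \<noteq> {}" "\<And>a. a \<in> F \<Longrightarrow> 0 \<le> l a" "sum l F = 1"
    and less: "\<And>z. z \<in> W \<Longrightarrow> (\<Sum>a\<in>F. l a * (gap W w a 0 - z (fst a - w))) < \<epsilon>"
    using weak_star_minimax[OF W cover] by blast
  have "F \<subseteq> G" using F(2) unfolding I_def by blast
  define m where "m = (\<Sum>a\<in>F. l a *\<^sub>R a)"
  have approx: "gap W w m z + q_L_defect l F < \<epsilon>" if "z \<in> W" for z
    using gap_convex_combination[OF F(1,3,4,5) W(2,3), of w z] less[OF that]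
    unfolding m_def gap_affine[of W w _ z] by linarith
  have nonneg: "0 \<le> q_L_defect l F"
    by (rule q_L_defect_nonneg[OF mono \<open>F \<subseteq> G\<close> F(4,5)])
  have less_2\<epsilon>: "q_L_defect l F < 2 * \<epsilon>"
  proof -
    obtain z where "z \<in> W" "- \<epsilon> < gap W w m z"
      by (rule gap_exists_gt[OF W(3) \<open>0 < \<epsilon>\<close>])
    then show ?thesis using approx[OF \<open>z \<in> W\<close>] by linarith
  qed
  have lower: "- q_L_defect l F \<le> q_L (b - m)" if "b \<in> G" for b
    unfolding m_def by (rule monotone_graph_q_L_defect[OF mono \<open>F \<subseteq> G\<close> F(4,5) that])
  have fst_m: "norm (fst m - w) \<le> M"
  proof -
    have "fst m - w = (\<Sum>a\<in>F. l a *\<^sub>R (fst a - w))"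
      using F(5) by (simp add: m_def fst_sum scaleR_diff_right sum_subtractf scaleR_sum_left[symmetric])
    also have "norm \<dots> \<le> M"
      using F(2) unfolding I_def by (intro norm_convex_combination_le[OF F(4,5)]) auto
    finally show ?thesis .
  qed
  have snd_m: "norm (snd m) \<le> N"
    using F(2) unfolding I_def m_def snd_sum snd_scaleR
    by (intro norm_convex_combination_le[OF F(4,5)]) auto
  show thesis by (rule that[OF fst_m snd_m nonneg less_2\<epsilon> approx lower])
qed

lemma quasidense_close_point:
  assumes qd: "quasidense G" "G \<noteq> {}" and "0 < \<epsilon>" "\<delta> < 2 * \<epsilon>"
    and lower: "\<And>b. b \<in> G \<Longrightarrow> - \<delta> \<le> q_L (b - m)"
  obtains b where "b \<in> G" "(norm (fst (b - m)))\<^sup>2 < 6 * \<epsilon>" "(norm (snd (b - m)))\<^sup>2 < 6 * \<epsilon>"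
    "q_L (b - m) < \<epsilon>"
proof -
  obtain b where b: "b \<in> G" "r_L (b - m) < \<epsilon>"
    using quasidenseD[OF qd \<open>0 < \<epsilon>\<close>] by blast
  have "- \<delta> \<le> q_L (b - m)" "0 \<le> (norm (fst (b - m)))\<^sup>2" "0 \<le> (norm (snd (b - m)))\<^sup>2"
    using lower[OF b(1)] by simp_all
  then show thesis
    using b(2) \<open>\<delta> < 2 * \<epsilon>\<close> unfolding r_L_def by (intro that[OF b(1)]) linarith+
qed

lemma quasidense_local_gap:
  assumes qd: "quasidense G" and mono: "monotone_graph G" and "b \<in> G"
    and \<epsilon>: "0 < \<epsilon>" "\<epsilon> \<le> 1" and R: "\<And>z. z \<in> W \<Longrightarrow> norm z \<le> R" and "z \<in> W"
  shows "\<exists>a\<in>G. norm (fst a - w) \<le> 2 * (R + norm (snd b) + norm (w - fst b) + 1)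
    \<and> norm (snd a) \<le> 2 * (R + norm (snd b) + norm (w - fst b) + 1) + R \<and> gap W w a z < \<epsilon>"
proof -
  obtain a where a: "a \<in> G" "r_L (a - (w, z)) < \<epsilon>"
    "norm (fst a - w) \<le> 2 * (norm (z - snd b) + norm (w - fst b) + 1)"
    "norm (snd a - z) \<le> 2 * (norm (z - snd b) + norm (w - fst b) + 1)"
    using quasidense_monotone_localized[OF qd mono \<open>b \<in> G\<close> \<epsilon>, of "(w, z)"] by auto
  have "norm (z - snd b) \<le> R + norm (snd b)"
    using norm_triangle_ineq4[of z "snd b"] R[OF \<open>z \<in> W\<close>] by linarith
  moreover have "norm (snd a) \<le> norm (snd a - z) + R"
    using norm_triangle_sub[of "snd a" z] R[OF \<open>z \<in> W\<close>] by linarith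
  moreover have "gap W w a z < \<epsilon>"
    using gap_le_r_L[OF \<open>z \<in> W\<close>, of w a] a(2) by linarith
  ultimately show ?thesis using a by (intro bexI[OF _ a(1)]) auto
qed

lemma quasidense_imp_uniform_gap:
  fixes G :: "('a::banach \<times> ('a \<Rightarrow>\<^sub>L real)) set"
  assumes qd: "quasidense G" and "G \<noteq> {}" and mono: "monotone_graph G"
    and W: "W \<noteq> {}" "compactin weak_star_topology W" "convex W" and "\<eta> > 0"
  obtains b c where "b \<in> G" "c < \<eta>" "\<And>z. z \<in> W \<Longrightarrow> gap W w b z \<le> c"
proof -
  obtain R where R: "\<And>z. z \<in> W \<Longrightarrow> norm z \<le> R"
    using weak_star_compact_norm_bounded[OF W(2)] by blast
  obtain z1 where "z1 \<in> W" using W(1) by blast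
  obtain b0 where "b0 \<in> G" using \<open>G \<noteq> {}\<close> by blast
  define M where "M = 2 * (R + norm (snd b0) + norm (w - fst b0) + 1)"
  text \<open>\<open>\<rho>\<close> is the admissible distance from the barycentre \<open>m\<close>; with \<open>\<epsilon> = \<rho>\<^sup>2 / 6\<close>,
    quasidensity at \<open>m\<close> yields points of \<open>G\<close> within \<open>\<rho>\<close> of \<open>m\<close>.\<close>
  define K where "K = 4 * M + 4 * R + 1"
  define \<rho> where "\<rho> = min 1 (\<eta> / (2 * K))"
  define \<epsilon> where "\<epsilon> = \<rho>\<^sup>2 / 6"
  have "0 \<le> R" using R[OF \<open>z1 \<in> W\<close>] norm_ge_zero[of z1] by linarith
  then have "1 \<le> K" by (simp add: M_def K_def)
  have \<rho>: "0 < \<rho>" "\<rho> \<le> 1" "\<rho> * K \<le> \<eta> / 2"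
  proof -
    show "0 < \<rho>" "\<rho> \<le> 1" using \<open>1 \<le> K\<close> \<open>\<eta> > 0\<close> by (simp_all add: \<rho>_def)
    have "\<rho> * K \<le> \<eta> / (2 * K) * K"
      using \<open>1 \<le> K\<close> by (intro mult_right_mono) (simp_all add: \<rho>_def)
    then show "\<rho> * K \<le> \<eta> / 2" using \<open>1 \<le> K\<close> by simp
  qed
  then have "\<rho>\<^sup>2 \<le> \<rho>" by (simp add: power2_eq_square mult_left_le)
  then have \<epsilon>: "0 < \<epsilon>" "\<epsilon> \<le> 1" "2 * \<epsilon> \<le> \<rho> / 3"
    using \<rho> by (simp_all add: \<epsilon>_def)
  have near: "\<forall>z\<in>W. \<exists>a\<in>G. norm (fst a - w) \<le> M \<and> norm (snd a) \<le> M + R \<and> gap W w a z < \<epsilon>"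
  proof
    fix z assume "z \<in> W"
    show "\<exists>a\<in>G. norm (fst a - w) \<le> M \<and> norm (snd a) \<le> M + R \<and> gap W w a z < \<epsilon>"
      unfolding M_def by (rule quasidense_local_gap[OF qd mono \<open>b0 \<in> G\<close> \<epsilon>(1,2) R \<open>z \<in> W\<close>])
  qed
  obtain m \<delta> where m: "norm (fst m - w) \<le> M" "norm (snd m) \<le> M + R" "0 \<le> \<delta>" "\<delta> < 2 * \<epsilon>"
    "\<And>z. z \<in> W \<Longrightarrow> gap W w m z + \<delta> < \<epsilon>" "\<And>b. b \<in> G \<Longrightarrow> - \<delta> \<le> q_L (b - m)"
    by (rule monotone_weak_star_convex_approx[OF mono \<epsilon>(1) W(2,3,1) near]) (rule that)
  obtain b where b: "b \<in> G" "(norm (fst (b - m)))\<^sup>2 < \<rho>\<^sup>2" "(norm (snd (b - m)))\<^sup>2 < \<rho>\<^sup>2"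
    "q_L (b - m) < \<epsilon>"
    using quasidense_close_point[OF qd \<open>G \<noteq> {}\<close> \<epsilon>(1) m(4,6)] unfolding \<epsilon>_def by auto
  have p: "norm (fst (b - m)) \<le> \<rho>" "norm (snd (b - m)) \<le> \<rho>"
    using b(2,3) \<rho>(1) by (auto intro: less_imp_le power2_less_imp_less)
  have "gap W w b z \<le> 2 * \<epsilon> + \<rho> * K" if z: "z \<in> W" for z
  proof -
    have "gap W w b z \<le> gap W w m z + \<rho> * K + q_L (b - m)"
      using gap_add_le_bounded[OF z R[OF z] m(1,2) p \<rho>(2)] unfolding K_def by simp
    then show ?thesis using m(3) m(5)[OF z] b(4) by linarith
  qed
  moreover have "2 * \<epsilon> + \<rho> * K < \<eta>"
    using \<epsilon>(3) \<rho> \<open>1 \<le> K\<close> \<open>\<eta> > 0\<close> mult_left_mono[of 1 K \<rho>] by linarith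
  ultimately show thesis using b(1) by (intro that)
qed

lemma SUP_pairing_le_of_gap_le:
  assumes "W \<noteq> {}" "\<And>z. z \<in> W \<Longrightarrow> gap W w p z \<le> c"
  shows "(norm (fst p - w))\<^sup>2 / 2 + (infdist (snd p) W)\<^sup>2 / 2 + (SUP z\<in>W. (snd p - z) (fst p - w)) \<le> c"
proof -
  have "(snd p - z) (fst p - w) \<le> c - (norm (fst p - w))\<^sup>2 / 2 - (infdist (snd p) W)\<^sup>2 / 2"
    if "z \<in> W" for z
    using assms(2)[OF that] by (simp add: gap_def q_L_def)
  then have "(SUP z\<in>W. (snd p - z) (fst p - w)) \<le> c - (norm (fst p - w))\<^sup>2 / 2 - (infdist (snd p) W)\<^sup>2 / 2"
    by (rule cSUP_least[OF assms(1)])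
  then show ?thesis by linarith
qed

theorem theorem6p1:
  fixes G :: "('a::banach \<times> ('a \<Rightarrow>\<^sub>L real)) set"
  assumes nonzero: "\<exists>x::'a. x \<noteq> 0"
    and nonempty: "G \<noteq> {}"
    and closed: "closed G"
    and mono: "monotone_graph G"
  shows "quasidense G \<longleftrightarrow>
    (\<forall>w::'a. \<forall>W :: ('a \<Rightarrow>\<^sub>L real) set. \<forall>\<eta>::real.
       W \<noteq> {} \<and> compactin weak_star_topology W \<and> convex W \<and> \<eta> > 0 \<longrightarrow>
       (\<exists>(s, s') \<in> G.
          (norm (s - w))\<^sup>2 / 2 + (infdist s' W)\<^sup>2 / 2
          + (SUP x' \<in> W. blinfun_apply (s' - x') (s - w)) < \<eta>))"
proof
  assume qd: "quasidense G"
  show "\<forall>w W \<eta>. W \<noteq> {} \<and> compactin weak_star_topology W \<and> convex W \<and> \<eta> > 0 \<longrightarrow>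
       (\<exists>(s, s') \<in> G. (norm (s - w))\<^sup>2 / 2 + (infdist s' W)\<^sup>2 / 2
          + (SUP x' \<in> W. blinfun_apply (s' - x') (s - w)) < \<eta>)"
  proof (intro allI impI, elim conjE)
    fix w :: 'a and W :: "('a \<Rightarrow>\<^sub>L real) set" and \<eta> :: real
    assume W: "W \<noteq> {}" "compactin weak_star_topology W" "convex W" and "\<eta> > 0"
    obtain b c where b: "b \<in> G" "c < \<eta>" "\<And>z. z \<in> W \<Longrightarrow> gap W w b z \<le> c"
      by (rule quasidense_imp_uniform_gap[OF qd nonempty mono W \<open>\<eta> > 0\<close>]) (rule that)
    have "(norm (fst b - w))\<^sup>2 / 2 + (infdist (snd b) W)\<^sup>2 / 2 + (SUP z\<in>W. (snd b - z) (fst b - w)) \<le> c"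
      by (rule SUP_pairing_le_of_gap_le[OF W(1) b(3)])
    then show "\<exists>(s, s') \<in> G. (norm (s - w))\<^sup>2 / 2 + (infdist s' W)\<^sup>2 / 2
          + (SUP x' \<in> W. blinfun_apply (s' - x') (s - w)) < \<eta>"
      using b(1,2) by (intro bexI[of _ b]) (auto simp: case_prod_beta)
  qed
next
  assume approx: "\<forall>w W \<eta>. W \<noteq> {} \<and> compactin weak_star_topology W \<and> convex W \<and> \<eta> > 0 \<longrightarrow>
       (\<exists>(s, s') \<in> G. (norm (s - w))\<^sup>2 / 2 + (infdist s' W)\<^sup>2 / 2
          + (SUP x' \<in> W. blinfun_apply (s' - x') (s - w)) < \<eta>)"
  show "quasidense G"
  proof (rule quasidenseI)
    fix y :: "'a \<times> ('a \<Rightarrow>\<^sub>L real)" and \<epsilon> :: real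
    assume "\<epsilon> > 0"
    then obtain s s' where "(s, s') \<in> G" "gap {snd y} (fst y) (s, s') (snd y) < \<epsilon>"
      using approx[rule_format, of "{snd y}" \<epsilon> "fst y"] by (auto simp: gap_def q_L_def)
    then show "\<exists>a\<in>G. r_L (a - y) < \<epsilon>"
      unfolding gap_singleton by (metis prod.collapse)
  qed
qed

end
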